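(* For $n\ge 2$, let $\mathscr{V}_n=\langle Q,\{a,b\},\delta\rangle$ with $Q=\{0,1,\dots,n-1\}$, where $\delta(i,b)=i+1$ for $0\le i\le n-2$ and $\delta(n-1,b)=0$; $\delta(i,a)=i+1$ for $0\le i\le n-3$, $\delta(n-2,a)=0$ and $\delta(n-1,a)=0$. Then $sc(Syn(\mathscr{V}_n))=2^n-n$.
   Context: For a DFA $\mathscr{A}=\langle Q,\Sigma,\delta\rangle$ (total transition function, extended to words), $Syn(\mathscr{A})$ is the set of words $w\in\Sigma^*$ such that $\delta(q,w)=\delta(q',w)$ for all $q,q'\in Q$. The state complexity $sc(L)$ of a regular language $L$ is the number of states of the minimal (complete) DFA recognizing $L$. *)

theory Defs
  imports Main
begin

datatype letter = La | Lb

definition Syn :: "'q set \<Rightarrow> ('q \<Rightarrow> 'a \<Rightarrow> 'q) \<Rightarrow> 'a list set" where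
  "Syn Q d = {w. \<forall>q\<in>Q. \<forall>q'\<in>Q. foldl d q w = foldl d q' w}"

definition dfa_recognizes :: "'a list set \<Rightarrow> nat set \<Rightarrow> (nat \<Rightarrow> 'a \<Rightarrow> nat) \<Rightarrow> nat \<Rightarrow> nat set \<Rightarrow> bool" where
  "dfa_recognizes L Q d q0 F \<longleftrightarrow>
     finite Q \<and> q0 \<in> Q \<and> F \<subseteq> Q \<and> (\<forall>q\<in>Q. \<forall>x. d q x \<in> Q) \<and>
     L = {w. foldl d q0 w \<in> F}"

definition sc :: "'a list set \<Rightarrow> nat" where
  "sc L = (LEAST m. \<exists>Q d q0 F. dfa_recognizes L Q d q0 F \<and> card Q = m)"

fun deltaV :: "nat \<Rightarrow> nat \<Rightarrow> letter \<Rightarrow> nat" where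
  "deltaV n i Lb = (if i + 1 < n then i + 1 else 0)"
| "deltaV n i La = (if i + 2 < n then i + 1 else 0)"

end

(*
  The minimal automaton of Syn(A) is the subset automaton in which every set of at most one
  state is merged into a single sink; it has 2^n - n states, which gives the upper bound for
  any automaton.  For V_n the letter b rotates the states, while a^(n-1) merges state n-1 into
  n-2 and fixes all others.  Hence a nonempty proper subset T, rotated so that some i \<in> T with
  i+1 \<notin> T lands on n-2, arises from the larger set T \<union> {n-1} by a^(n-1): every nonempty
  subset is reachable.  The word b^(n-q) (a^(n-1) b)^(n-2) sends q to n-2 and every other state
  to n-1, so it synchronizes exactly those sets of states that avoid q; thus any two distinct
  sets of at least two states are separated, and Myhill-Nerode gives the lower bound.
*)

theory Submission
  imports Defs "HOL-Library.Nat_Bijection"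
begin

definition run_image :: "('q \<Rightarrow> 'a \<Rightarrow> 'q) \<Rightarrow> 'q set \<Rightarrow> 'a list \<Rightarrow> 'q set" where
  "run_image d X w = (\<lambda>q. foldl d q w) ` X"

lemma run_image_Nil [simp]: "run_image d X [] = X"
  by (simp add: run_image_def)

lemma run_image_append: "run_image d X (u @ v) = run_image d (run_image d X u) v"
  by (auto simp: run_image_def image_image)

lemma finite_run_image [simp]: "finite X \<Longrightarrow> finite (run_image d X w)"
  by (simp add: run_image_def)

lemma card_run_image_le: "finite X \<Longrightarrow> card (run_image d X w) \<le> card X"
  by (simp add: run_image_def card_image_le)

lemma foldl_closed: "q \<in> Q \<Longrightarrow> \<forall>q\<in>Q. \<forall>x. d q x \<in> Q \<Longrightarrow> foldl d q w \<in> Q"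
  by (induction w arbitrary: q) auto

lemma run_image_subset: "X \<subseteq> Q \<Longrightarrow> \<forall>q\<in>Q. \<forall>x. d q x \<in> Q \<Longrightarrow> run_image d X w \<subseteq> Q"
  by (auto simp: run_image_def intro: foldl_closed)

lemma Syn_iff_card_run_image:
  "finite Q \<Longrightarrow> w \<in> Syn Q d \<longleftrightarrow> card (run_image d Q w) \<le> 1"
  by (auto simp: Syn_def run_image_def card_le_Suc0_iff_eq)

lemma card_le_card_states_if_distinguishable:
  assumes "dfa_recognizes L Q d q0 F"
    and "\<And>x y. x \<in> I \<Longrightarrow> y \<in> I \<Longrightarrow> x \<noteq> y \<Longrightarrow> \<exists>w. (r x @ w \<in> L) \<noteq> (r y @ w \<in> L)"
  shows "card I \<le> card Q"
proof -
  from assms(1) have "finite Q" "q0 \<in> Q" "\<forall>q\<in>Q. \<forall>x. d q x \<in> Q"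
    and L: "L = {w. foldl d q0 w \<in> F}"
    by (auto simp: dfa_recognizes_def)
  define f where "f x = foldl d q0 (r x)" for x
  have "inj_on f I"
  proof (rule inj_onI, rule ccontr)
    fix x y assume "x \<in> I" "y \<in> I" "f x = f y" "x \<noteq> y"
    then obtain w where "(r x @ w \<in> L) \<noteq> (r y @ w \<in> L)" using assms(2) by blast
    with \<open>f x = f y\<close> show False by (simp add: L f_def)
  qed
  moreover have "f ` I \<subseteq> Q" using foldl_closed \<open>q0 \<in> Q\<close> \<open>\<forall>q\<in>Q. \<forall>x. d q x \<in> Q\<close>
    by (auto simp: f_def)
  ultimately show ?thesis using card_inj_on_le \<open>finite Q\<close> by blast
qed

definition multi_subsets :: "'q set \<Rightarrow> 'q set set" where
  "multi_subsets Q = {T. T \<subseteq> Q \<and> 2 \<le> card T}"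

lemma finite_multi_subsets: "finite Q \<Longrightarrow> finite (multi_subsets Q)"
  by (rule finite_subset[of _ "Pow Q"]) (auto simp: multi_subsets_def)

lemma card_multi_subsets:
  assumes "finite Q"
  shows "card (multi_subsets Q) + card Q + 1 = 2 ^ card Q"
proof -
  let ?small = "insert {} ((\<lambda>q. {q}) ` Q)"
  have "Pow Q = multi_subsets Q \<union> ?small"
  proof (intro equalityI subsetI)
    fix T assume "T \<in> Pow Q"
    then have "finite T" "T \<subseteq> Q" using assms finite_subset by auto
    moreover have "T = {} \<or> (\<exists>q. T = {q})" if "card T < 2"
      using that \<open>finite T\<close> by (auto simp: less_2_cases_iff card_1_singleton_iff)
    ultimately show "T \<in> multi_subsets Q \<union> ?small"
      by (cases "2 \<le> card T") (auto simp: multi_subsets_def)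
  qed (auto simp: multi_subsets_def)
  moreover have "multi_subsets Q \<inter> ?small = {}" by (auto simp: multi_subsets_def)
  moreover have "card ?small = card Q + 1"
    using assms by (subst card_insert_disjoint) (auto simp: card_image inj_on_def)
  ultimately have "card (Pow Q) = card (multi_subsets Q) + (card Q + 1)"
    using assms finite_multi_subsets by (metis card_Un_disjoint finite.insertI finite_imageI)
  then show ?thesis using assms by (simp add: card_Pow)
qed

definition collapse :: "'q set \<Rightarrow> 'q set" where
  "collapse X = (if 2 \<le> card X then X else {})"

lemma collapse_eq_empty_iff: "collapse X = {} \<longleftrightarrow> card X \<le> 1"
  by (auto simp: collapse_def)

lemma collapse_in_multi_subsets: "X \<subseteq> Q \<Longrightarrow> collapse X \<in> insert {} (multi_subsets Q)"
  by (simp add: collapse_def multi_subsets_def)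

lemma collapse_run_image:
  assumes "finite S"
  shows "collapse (run_image d (collapse S) w) = collapse (run_image d S w)"
proof (cases "2 \<le> card S")
  case False
  then have "\<not> 2 \<le> card (run_image d S w)"
    using card_run_image_le[OF assms] by (meson le_trans)
  with False show ?thesis by (simp add: collapse_def run_image_def)
qed (simp add: collapse_def)

(* The minimal automaton of Syn: a state is a set of at least two states of the given
   automaton, encoded by set_encode, or 0 = set_encode {}, the sink reached by exactly the
   synchronizing words. *)

definition syn_dfa :: "(nat \<Rightarrow> 'a \<Rightarrow> nat) \<Rightarrow> nat \<Rightarrow> 'a \<Rightarrow> nat" where
  "syn_dfa d c x = set_encode (collapse (run_image d (set_decode c) [x]))"

definition syn_states :: "nat set \<Rightarrow> nat set" where
  "syn_states Q = set_encode ` insert {} (multi_subsets Q)"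

lemma foldl_syn_dfa:
  "finite S \<Longrightarrow> foldl (syn_dfa d) (set_encode (collapse S)) w = set_encode (collapse (run_image d S w))"
proof (induction w arbitrary: S)
  case (Cons x w)
  have "finite (collapse S)" using Cons.prems by (simp add: collapse_def)
  then have "syn_dfa d (set_encode (collapse S)) x = set_encode (collapse (run_image d (collapse S) [x]))"
    by (simp add: syn_dfa_def)
  also have "\<dots> = set_encode (collapse (run_image d S [x]))"
    by (simp only: collapse_run_image[OF Cons.prems])
  finally have "foldl (syn_dfa d) (set_encode (collapse S)) (x # w)
      = foldl (syn_dfa d) (set_encode (collapse (run_image d S [x]))) w"
    by simp
  also have "\<dots> = set_encode (collapse (run_image d (run_image d S [x]) w))"
    using Cons.IH Cons.prems by simp
  finally show ?case by (simp flip: run_image_append)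
qed simp

lemma syn_dfa_recognizes:
  assumes "finite Q" and closed: "\<forall>q\<in>Q. \<forall>x. d q x \<in> Q"
  shows "dfa_recognizes (Syn Q d) (syn_states Q) (syn_dfa d) (set_encode (collapse Q)) {0}"
  unfolding dfa_recognizes_def
proof (intro conjI ballI allI)
  show "finite (syn_states Q)"
    using assms by (simp add: syn_states_def finite_multi_subsets)
  show "set_encode (collapse Q) \<in> syn_states Q"
    unfolding syn_states_def by (intro imageI collapse_in_multi_subsets) simp
  show "{0} \<subseteq> syn_states Q"
    unfolding syn_states_def by (simp add: image_eqI[of _ _ "{}"])
  fix c x assume "c \<in> syn_states Q"
  then obtain S where "S \<in> insert {} (multi_subsets Q)" "c = set_encode S"
    unfolding syn_states_def by blast
  then have "finite S" "S \<subseteq> Q"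
    using \<open>finite Q\<close> finite_subset by (auto simp: multi_subsets_def)
  then have "syn_dfa d c x = set_encode (collapse (run_image d S [x]))"
    by (simp add: syn_dfa_def \<open>c = set_encode S\<close>)
  moreover have "collapse (run_image d S [x]) \<in> insert {} (multi_subsets Q)"
    using run_image_subset[OF \<open>S \<subseteq> Q\<close> closed] by (rule collapse_in_multi_subsets)
  ultimately show "syn_dfa d c x \<in> syn_states Q"
    unfolding syn_states_def by (simp only: image_eqI)
next
  have "foldl (syn_dfa d) (set_encode (collapse Q)) w = 0 \<longleftrightarrow> card (run_image d Q w) \<le> 1" for w
  proof -
    have "finite (collapse (run_image d Q w))" using \<open>finite Q\<close> by (simp add: collapse_def)
    from set_encode_eq[OF this finite.emptyI] show ?thesis
      unfolding foldl_syn_dfa[OF \<open>finite Q\<close>] set_encode_empty collapse_eq_empty_iff .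
  qed
  then show "Syn Q d = {w. foldl (syn_dfa d) (set_encode (collapse Q)) w \<in> {0}}"
    unfolding set_eq_iff Syn_iff_card_run_image[OF \<open>finite Q\<close>] by simp
qed

lemma card_syn_states: "finite Q \<Longrightarrow> card (syn_states Q) = 2 ^ card Q - card Q"
proof -
  assume "finite Q"
  have "inj_on set_encode (insert {} (multi_subsets Q))"
    using \<open>finite Q\<close> by (intro inj_on_subset[OF inj_on_set_encode])
      (auto simp: multi_subsets_def intro: finite_subset)
  moreover have "{} \<notin> multi_subsets Q" by (simp add: multi_subsets_def)
  ultimately show ?thesis
    using card_multi_subsets[OF \<open>finite Q\<close>] finite_multi_subsets[OF \<open>finite Q\<close>]
    by (simp add: syn_states_def card_image)
qed

lemma sc_Syn_eq:
  fixes Q :: "nat set" and d :: "nat \<Rightarrow> 'a \<Rightarrow> nat"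
  assumes "finite Q" "Q \<noteq> {}" and closed: "\<forall>q\<in>Q. \<forall>x. d q x \<in> Q"
    and reachable: "\<And>T. T \<subseteq> Q \<Longrightarrow> T \<noteq> {} \<Longrightarrow> \<exists>u. run_image d Q u = T"
    and separable: "\<And>X Y. X \<in> multi_subsets Q \<Longrightarrow> Y \<in> multi_subsets Q \<Longrightarrow> X \<noteq> Y \<Longrightarrow>
      \<exists>w. (card (run_image d X w) \<le> 1) \<noteq> (card (run_image d Y w) \<le> 1)"
  shows "sc (Syn Q d) = 2 ^ card Q - card Q"
  unfolding sc_def
proof (rule Least_equality)
  show "\<exists>S d' q0 F. dfa_recognizes (Syn Q d) S d' q0 F \<and> card S = 2 ^ card Q - card Q"
    using syn_dfa_recognizes[OF \<open>finite Q\<close> closed] card_syn_states[OF \<open>finite Q\<close>] by blast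
next
  fix m assume "\<exists>S d' q0 F. dfa_recognizes (Syn Q d) S d' q0 F \<and> card S = m"
  then obtain S d' q0 F where D: "dfa_recognizes (Syn Q d) S d' q0 F" and "card S = m"
    by blast
  obtain q where "q \<in> Q" using \<open>Q \<noteq> {}\<close> by blast
  define I where "I = insert {q} (multi_subsets Q)"
  define r where "r T = (SOME u. run_image d Q u = T)" for T
  have "run_image d Q (r T) = T" if "T \<in> I" for T
    unfolding r_def
    by (rule someI_ex, rule reachable) (use that \<open>q \<in> Q\<close> in \<open>auto simp: I_def multi_subsets_def\<close>)
  then have Syn_r: "r T @ w \<in> Syn Q d \<longleftrightarrow> card (run_image d T w) \<le> 1" if "T \<in> I" for T w
    using that \<open>finite Q\<close> by (simp add: Syn_iff_card_run_image run_image_append)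
  have "card I \<le> card S"
  proof (rule card_le_card_states_if_distinguishable[OF D])
    fix X Y assume "X \<in> I" "Y \<in> I" "X \<noteq> Y"
    then consider "X = {q}" "Y \<in> multi_subsets Q" | "Y = {q}" "X \<in> multi_subsets Q"
      | "X \<in> multi_subsets Q" "Y \<in> multi_subsets Q"
      by (auto simp: I_def)
    then have "\<exists>w. (card (run_image d X w) \<le> 1) \<noteq> (card (run_image d Y w) \<le> 1)"
      by cases (use separable \<open>X \<noteq> Y\<close> in \<open>auto simp: multi_subsets_def intro: exI[of _ "[]"]\<close>)
    then show "\<exists>w. (r X @ w \<in> Syn Q d) \<noteq> (r Y @ w \<in> Syn Q d)"
      using Syn_r \<open>X \<in> I\<close> \<open>Y \<in> I\<close> by auto
  qed
  moreover have "card I = 2 ^ card Q - card Q"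
    using card_multi_subsets[OF \<open>finite Q\<close>] finite_multi_subsets[OF \<open>finite Q\<close>]
    by (simp add: I_def multi_subsets_def)
  ultimately show "2 ^ card Q - card Q \<le> m" using \<open>card S = m\<close> by simp
qed

lemma add_diff_mod_eq_0_iff:
  fixes x q n :: nat
  assumes "x < n" "q < n"
  shows "(x + (n - q)) mod n = 0 \<longleftrightarrow> x = q"
proof (cases "q \<le> x")
  case True
  then have "x + (n - q) = (x - q) + n" using assms by simp
  then have "(x + (n - q)) mod n = x - q"
    using assms by (metis mod_add_self2 mod_less less_imp_diff_less)
  then show ?thesis using True by simp
qed (use assms in simp)

lemma succ_mod_closed_eq_atLeastLessThan:
  fixes T :: "nat set"
  assumes "T \<subseteq> {0..<n}" "t \<in> T" and closed: "\<forall>i\<in>T. (i + 1) mod n \<in> T"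
  shows "T = {0..<n}"
proof
  have "t < n" using assms by auto
  have orbit: "(t + m) mod n \<in> T" for m
  proof (induction m)
    case (Suc m)
    then have "((t + m) mod n + 1) mod n \<in> T" using closed by blast
    then show ?case by (simp add: mod_Suc_eq)
  qed (use \<open>t \<in> T\<close> \<open>t < n\<close> in simp)
  show "{0..<n} \<subseteq> T"
  proof
    fix x assume "x \<in> {0..<n}"
    then have "(t + (x + n - t)) mod n = x" using \<open>t < n\<close> by simp
    then show "x \<in> T" using orbit[of "x + n - t"] by simp
  qed
qed (rule assms(1))

lemma deltaV_less: "0 < n \<Longrightarrow> deltaV n q x < n"
  by (cases x) auto

lemma foldl_deltaV_Lb: "q < n \<Longrightarrow> foldl (deltaV n) q (replicate m Lb) = (q + m) mod n"
proof (induction m arbitrary: q)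
  case (Suc m)
  have "deltaV n q Lb = (q + 1) mod n" "deltaV n q Lb < n"
    using Suc.prems by (cases "Suc q = n"; auto)+
  then show ?case using Suc.IH by (simp add: mod_add_left_eq)
qed simp

lemma foldl_deltaV_La:
  "q < n - 1 \<Longrightarrow> foldl (deltaV n) q (replicate m La) = (q + m) mod (n - 1)"
proof (induction m arbitrary: q)
  case (Suc m)
  have "deltaV n q La = (q + 1) mod (n - 1)" "deltaV n q La < n - 1"
    using Suc.prems by (cases "Suc q = n - 1"; auto)+
  then show ?case using Suc.IH by (simp add: mod_add_left_eq)
qed simp

lemma foldl_deltaV_merge:
  assumes "2 \<le> n" "q < n"
  shows "foldl (deltaV n) q (replicate (n - 1) La) = (if q = n - 1 then n - 2 else q)"
proof (cases "q = n - 1")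
  case True
  have "replicate (n - 1) La = La # replicate (n - 2) La"
    using assms by (simp add: numeral_2_eq_2 flip: replicate_Suc)
  moreover have "deltaV n q La = 0" using True by simp
  ultimately show ?thesis
    using True assms foldl_deltaV_La[of 0 n "n - 2"] by simp
next
  case False
  then have "q < n - 1" using assms by simp
  then have "(q + (n - 1)) mod (n - 1) = q" by (metis mod_add_self2 mod_less)
  then show ?thesis using False foldl_deltaV_La[OF \<open>q < n - 1\<close>, of "n - 1"] by simp
qed

lemma foldl_deltaV_sweep:
  assumes "2 \<le> n" "q < n"
  shows "foldl (deltaV n) q (concat (replicate m (replicate (n - 1) La @ [Lb]))) = min (q + m) (n - 1)"
  using assms(2)
proof (induction m arbitrary: q)
  case (Suc m)
  let ?w = "replicate (n - 1) La @ [Lb]"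
  have "foldl (deltaV n) q (concat (replicate (Suc m) ?w))
      = foldl (deltaV n) (foldl (deltaV n) q ?w) (concat (replicate m ?w))"
    by simp
  also have "foldl (deltaV n) q ?w = min (q + 1) (n - 1)"
    using foldl_deltaV_merge[OF assms(1) Suc.prems] Suc.prems by auto
  also have "foldl (deltaV n) (min (q + 1) (n - 1)) (concat (replicate m ?w))
      = min (min (q + 1) (n - 1) + m) (n - 1)"
    by (rule Suc.IH) (use assms(1) in simp)
  also have "\<dots> = min (q + Suc m) (n - 1)" by linarith
  finally show ?case .
qed simp

definition separating_word :: "nat \<Rightarrow> nat \<Rightarrow> letter list" where
  "separating_word n q = replicate (n - q) Lb @ concat (replicate (n - 2) (replicate (n - 1) La @ [Lb]))"

lemma foldl_deltaV_separating_word: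
  assumes "2 \<le> n" "x < n" "q < n"
  shows "foldl (deltaV n) x (separating_word n q) = (if x = q then n - 2 else n - 1)"
proof -
  define y where "y = (x + (n - q)) mod n"
  have "y < n" using assms by (simp add: y_def)
  have "foldl (deltaV n) x (separating_word n q)
      = foldl (deltaV n) y (concat (replicate (n - 2) (replicate (n - 1) La @ [Lb])))"
    using foldl_deltaV_Lb[OF assms(2)] by (simp add: separating_word_def y_def)
  also have "\<dots> = min (y + (n - 2)) (n - 1)"
    by (rule foldl_deltaV_sweep[OF assms(1) \<open>y < n\<close>])
  also have "\<dots> = (if y = 0 then n - 2 else n - 1)"
    using \<open>y < n\<close> assms(1) by auto
  also have "y = 0 \<longleftrightarrow> x = q"
    unfolding y_def using assms(2,3) by (rule add_diff_mod_eq_0_iff)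
  finally show ?thesis .
qed

lemma run_image_deltaV_separating_word:
  assumes "2 \<le> n" "X \<in> multi_subsets {0..<n}" "Y \<subseteq> {0..<n}" "q \<in> X" "q \<notin> Y"
  shows "2 \<le> card (run_image (deltaV n) X (separating_word n q))"
    and "card (run_image (deltaV n) Y (separating_word n q)) \<le> 1"
proof -
  have "X \<subseteq> {0..<n}" "2 \<le> card X" using assms(2) by (auto simp: multi_subsets_def)
  then have "\<not> X \<subseteq> {q}" using card_mono[of "{q}" X] by auto
  then obtain x where "x \<in> X" "x \<noteq> q" by blast
  moreover have "foldl (deltaV n) q (separating_word n q) = n - 2"
    and "foldl (deltaV n) x (separating_word n q) = n - 1"
    using assms(4) \<open>x \<in> X\<close> \<open>x \<noteq> q\<close> \<open>X \<subseteq> {0..<n}\<close> foldl_deltaV_separating_word[OF assms(1)]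
    by (simp_all add: subset_iff)
  ultimately have "{n - 2, n - 1} \<subseteq> run_image (deltaV n) X (separating_word n q)"
    using assms(4) unfolding run_image_def by (metis empty_subsetI image_eqI insert_subset)
  moreover have "finite X" using \<open>X \<subseteq> {0..<n}\<close> finite_subset by blast
  ultimately have "card {n - 2, n - 1} \<le> card (run_image (deltaV n) X (separating_word n q))"
    by (intro card_mono finite_run_image)
  then show "2 \<le> card (run_image (deltaV n) X (separating_word n q))"
    using assms(1) by simp
  have "q < n" using assms(4) \<open>X \<subseteq> {0..<n}\<close> by auto
  then have "run_image (deltaV n) Y (separating_word n q) \<subseteq> {n - 1}"
    using assms(3,5) foldl_deltaV_separating_word[OF assms(1)] by (auto simp: run_image_def subset_iff)
  then show "card (run_image (deltaV n) Y (separating_word n q)) \<le> 1"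
    using card_mono[of "{n - 1}"] by fastforce
qed

lemma deltaV_separable:
  assumes "2 \<le> n" "X \<in> multi_subsets {0..<n}" "Y \<in> multi_subsets {0..<n}" "X \<noteq> Y"
  shows "\<exists>w. (card (run_image (deltaV n) X w) \<le> 1) \<noteq> (card (run_image (deltaV n) Y w) \<le> 1)"
proof -
  have "X \<subseteq> {0..<n}" "Y \<subseteq> {0..<n}" using assms(2,3) by (auto simp: multi_subsets_def)
  from \<open>X \<noteq> Y\<close> consider q where "q \<in> X" "q \<notin> Y" | q where "q \<in> Y" "q \<notin> X"
    by blast
  then show ?thesis
  proof cases
    case 1
    then show ?thesis
      using run_image_deltaV_separating_word[OF assms(1,2) \<open>Y \<subseteq> {0..<n}\<close> 1]
      by (intro exI[of _ "separating_word n q"]) auto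
  next
    case 2
    then show ?thesis
      using run_image_deltaV_separating_word[OF assms(1,3) \<open>X \<subseteq> {0..<n}\<close> 2]
      by (intro exI[of _ "separating_word n q"]) auto
  qed
qed

lemma run_image_deltaV_Lb:
  "X \<subseteq> {0..<n} \<Longrightarrow> run_image (deltaV n) X (replicate m Lb) = (\<lambda>q. (q + m) mod n) ` X"
  by (auto simp: run_image_def foldl_deltaV_Lb subset_iff intro!: image_cong)

lemma run_image_deltaV_merge:
  assumes "2 \<le> n" "X \<subseteq> {0..<n}" "n - 2 \<in> X"
  shows "run_image (deltaV n) (insert (n - 1) X) (replicate (n - 1) La) = X - {n - 1}"
proof -
  have "run_image (deltaV n) (insert (n - 1) X) (replicate (n - 1) La)
      = (\<lambda>q. if q = n - 1 then n - 2 else q) ` insert (n - 1) X"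
    unfolding run_image_def using assms(1,2) foldl_deltaV_merge
    by (intro image_cong) auto
  also have "\<dots> = X - {n - 1}" using assms by auto
  finally show ?thesis .
qed

lemma deltaV_rotate_gap_to_end:
  assumes "2 \<le> n" "T \<subseteq> {0..<n}" "i \<in> T" "(i + 1) mod n \<notin> T"
  obtains T' where "T' \<subseteq> {0..<n}" "card T' = card T" "n - 2 \<in> T'" "n - 1 \<notin> T'"
    and "run_image (deltaV n) T' (replicate (i + 2) Lb) = T"
proof
  have "i < n" using assms by auto
  define T' where "T' = run_image (deltaV n) T (replicate (2 * n - 2 - i) Lb)"
  show "T' \<subseteq> {0..<n}" using assms(1,2) by (auto simp: T'_def run_image_deltaV_Lb)
  show rotate_back: "run_image (deltaV n) T' (replicate (i + 2) Lb) = T"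
  proof -
    have "2 * n - 2 - i + (i + 2) = 2 * n" using \<open>i < n\<close> by simp
    then have "run_image (deltaV n) T' (replicate (i + 2) Lb) = run_image (deltaV n) T (replicate (2 * n) Lb)"
      by (simp only: T'_def flip: run_image_append replicate_add)
    also have "\<dots> = T" using assms(2) by (force simp: run_image_deltaV_Lb)
    finally show ?thesis .
  qed
  have "finite T" using assms(2) finite_subset by blast
  then show "card T' = card T"
    using card_run_image_le[of T] card_run_image_le[of T'] rotate_back
    by (metis T'_def finite_run_image le_antisym)
  have "i + (2 * n - 2 - i) = (n - 2) + n" using \<open>i < n\<close> assms(1) by simp
  then have "(i + (2 * n - 2 - i)) mod n = n - 2"
    using assms(1) by (metis mod_add_self2 mod_less diff_less zero_less_numeral order_less_le_trans)
  then show "n - 2 \<in> T'" using assms(2,3) by (force simp: T'_def run_image_deltaV_Lb)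
  show "n - 1 \<notin> T'"
  proof
    assume "n - 1 \<in> T'"
    then have "(n - 1 + (i + 2)) mod n \<in> run_image (deltaV n) T' (replicate (i + 2) Lb)"
      by (subst run_image_deltaV_Lb[OF \<open>T' \<subseteq> {0..<n}\<close>]) blast
    then have "(n - 1 + (i + 2)) mod n \<in> T" by (simp only: rotate_back)
    moreover have "n - 1 + (i + 2) = (i + 1) + n" using assms(1) by simp
    then have "(n - 1 + (i + 2)) mod n = (i + 1) mod n" by (metis mod_add_self2)
    ultimately show False using assms(4) by simp
  qed
qed

lemma deltaV_reachable:
  assumes "2 \<le> n" "T \<subseteq> {0..<n}" "T \<noteq> {}"
  shows "\<exists>u. run_image (deltaV n) {0..<n} u = T"
  using assms(2,3)
proof (induction "n - card T" arbitrary: T rule: less_induct)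
  case less
  show ?case
  proof (cases "T = {0..<n}")
    case True
    then show ?thesis by (intro exI[of _ "[]"]) simp
  next
    case False
    then obtain i where "i \<in> T" "(i + 1) mod n \<notin> T"
      using succ_mod_closed_eq_atLeastLessThan less.prems by blast
    then obtain T' where T': "T' \<subseteq> {0..<n}" "card T' = card T" "n - 2 \<in> T'" "n - 1 \<notin> T'"
      and rotate_back: "run_image (deltaV n) T' (replicate (i + 2) Lb) = T"
      using deltaV_rotate_gap_to_end[OF assms(1) less.prems(1)] by blast
    have "card T < n" using less.prems False psubset_card_mono[of "{0..<n}" T] by auto
    then have "n - card (insert (n - 1) T') < n - card T"
      using T' finite_subset by fastforce
    then obtain u where "run_image (deltaV n) {0..<n} u = insert (n - 1) T'"
      using less.hyps T'(1) assms(1) by force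
    then have "run_image (deltaV n) {0..<n} (u @ replicate (n - 1) La @ replicate (i + 2) Lb) = T"
      using run_image_deltaV_merge[OF assms(1) T'(1,3)] T'(4) rotate_back
      by (simp add: run_image_append)
    then show ?thesis by blast
  qed
qed

theorem proposition4:
  fixes n :: nat
  assumes "n \<ge> 2"
  shows "sc (Syn {0..<n} (deltaV n)) = 2 ^ n - n"
proof -
  have "sc (Syn {0..<n} (deltaV n)) = 2 ^ card {0..<n} - card {0..<n}"
  proof (rule sc_Syn_eq)
    show "{0..<n} \<noteq> {}" and "\<forall>q\<in>{0..<n}. \<forall>x. deltaV n q x \<in> {0..<n}"
      using assms by (simp_all add: deltaV_less)
  next
    fix T assume "T \<subseteq> {0..<n}" "T \<noteq> {}"
    then show "\<exists>u. run_image (deltaV n) {0..<n} u = T" by (rule deltaV_reachable[OF assms])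
  next
    fix X Y assume "X \<in> multi_subsets {0..<n}" "Y \<in> multi_subsets {0..<n}" "X \<noteq> Y"
    then show "\<exists>w. (card (run_image (deltaV n) X w) \<le> 1) \<noteq> (card (run_image (deltaV n) Y w) \<le> 1)"
      by (rule deltaV_separable[OF assms])
  qed simp
  then show ?thesis by simp
qed

end
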